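(* Let $\mathcal{C}$ be a finite or countable alphabet with letter probabilities $(p_\alpha)_{\alpha\in\mathcal{C}}$, $0<p_\alpha<1$, $\sum_\alpha p_\alpha=1$, and let $\mathbb{P}$ be the product measure with these identically distributed marginals. Then for every $n\ge2$, $\mathbb{P}\Big(\bigcup_{j=1}^{\lceil n/2\rceil}B_n(j)\Big)=\mathbb{P}\Big(\bigcup_{j=\lfloor n/2\rfloor}^{n-1}R_n(j)\Big)\le\frac{n}{2}\,m_2^{\lfloor n/2\rfloor}$.
   Context: $\mathbb{P}(x_1^n)=\prod_{i=1}^n p_{x_i}$; $x_a^b=(x_a,\dots,x_b)$; $m_2=\sum_\alpha p_\alpha^2$. For $1\le j\le n-1$, $R_n(j)=\{x_1^n\in\mathcal{C}^n: x_1^j=x_{n-j+1}^n\}$, and $B_n(j)$ is the set of strings $x_1^n\in\mathcal{C}^n$ that are obtained by repeating the block $x_1^j$: writing $n=j\lfloor n/j\rfloor+r$ with $0\le r<j$, $x_1^n=(x_1^j,x_1^j,\dots,x_1^j,x_1^r)$ with $\lfloor n/j\rfloor$ copies of $x_1^j$ (equivalently $x_{i+j}=x_i$ for all $1\le i\le n-j$). *)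

theory Defs
  imports "HOL-Analysis.Analysis"
begin

text \<open>Strings of length n over alphabet C are lists (0-indexed: x_i is xs ! (i-1)).\<close>
definition strings :: "'a set \<Rightarrow> nat \<Rightarrow> 'a list set" where
  "strings C n = {xs. length xs = n \<and> set xs \<subseteq> C}"

definition Pr :: "('a \<Rightarrow> real) \<Rightarrow> 'a list set \<Rightarrow> real" where
  "Pr p S = infsum (\<lambda>xs. \<Prod>i<length xs. p (xs ! i)) S"

definition m2 :: "('a \<Rightarrow> real) \<Rightarrow> 'a set \<Rightarrow> real" where
  "m2 p C = infsum (\<lambda>a. (p a)^2) C"

definition Rset :: "'a set \<Rightarrow> nat \<Rightarrow> nat \<Rightarrow> 'a list set" where
  "Rset C n j = {xs \<in> strings C n. take j xs = drop (n - j) xs}"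

definition Bset :: "'a set \<Rightarrow> nat \<Rightarrow> nat \<Rightarrow> 'a list set" where
  "Bset C n j = {xs \<in> strings C n. \<forall>i. i + j < n \<longrightarrow> xs ! (i + j) = xs ! i}"

end

theory Submission
  imports Defs
begin

text \<open>Since \<open>R\<^sub>n(j) = B\<^sub>n(n - j)\<close>, the two unions coincide. A string of period \<open>j\<close> is
  determined by its first block of \<open>j\<close> letters; for \<open>j \<le> \<lceil>n/2\<rceil>\<close> the letters at positions
  \<open>j, \<dots>, j + t - 1\<close> with \<open>t = min j (n - j)\<close> repeat the first \<open>t\<close> letters, so summing over
  the first block gives the factor \<open>m\<^sub>2\<^sup>t\<close>, while each of the remaining \<open>n - j - t\<close> letters
  has probability at most \<open>max p \<le> \<surd>m\<^sub>2\<close>. Hence \<open>P(B\<^sub>n(j)) \<le> m\<^sub>2\<^bsup>\<lfloor>n/2\<rfloor>\<^esup>\<close>, and a union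
  bound over at most \<open>n/2\<close> indices (for odd \<open>n\<close>, \<open>B\<^sub>n(1) \<subseteq> B\<^sub>n(2)\<close>) concludes.\<close>

definition word_prob :: "('a \<Rightarrow> real) \<Rightarrow> 'a list \<Rightarrow> real" where
  "word_prob p xs = (\<Prod>i<length xs. p (xs ! i))"

lemma Pr_eq_infsum_word_prob: "Pr p S = infsum (word_prob p) S"
  unfolding Pr_def word_prob_def[abs_def] ..

lemma bij_betw_map_upt_strings:
  "bij_betw (\<lambda>g. map g [0..<j]) (PiE {..<j} (\<lambda>_. C)) (strings C j)"
proof (rule bij_betwI')
  fix g h assume g: "g \<in> PiE {..<j} (\<lambda>_. C)" and h: "h \<in> PiE {..<j} (\<lambda>_. C)"
  show "(map g [0..<j] = map h [0..<j]) = (g = h)"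
  proof
    assume "map g [0..<j] = map h [0..<j]"
    then have "\<forall>k<j. g k = h k" by simp
    then show "g = h" using g h by (auto intro: PiE_ext)
  qed simp
next
  fix g assume "g \<in> PiE {..<j} (\<lambda>_. C)"
  then show "map g [0..<j] \<in> strings C j" unfolding strings_def by (auto simp: PiE_iff)
next
  fix u assume u: "u \<in> strings C j"
  show "\<exists>g\<in>PiE {..<j} (\<lambda>_. C). u = map g [0..<j]"
  proof
    show "u = map (\<lambda>k. if k < j then u ! k else undefined) [0..<j]"
      using u by (auto simp: strings_def intro!: nth_equalityI)
    show "(\<lambda>k. if k < j then u ! k else undefined) \<in> PiE {..<j} (\<lambda>_. C)"
      using u by (auto simp: strings_def PiE_iff extensional_def)
  qed
qed

text \<open>Positivity of the factor sums only serves to deduce summability: a non-summable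
  family has \<open>infsum\<close> equal to \<open>0\<close>.\<close>
lemma has_sum_prod_nth_strings:
  fixes f :: "nat \<Rightarrow> 'a \<Rightarrow> real"
  assumes nonneg: "\<And>k a. k < j \<Longrightarrow> a \<in> C \<Longrightarrow> 0 \<le> f k a"
    and summable: "\<And>k. k < j \<Longrightarrow> f k summable_on C"
    and pos: "\<And>k. k < j \<Longrightarrow> 0 < infsum (f k) C"
  shows "((\<lambda>u. \<Prod>k<j. f k (u ! k)) has_sum (\<Prod>k<j. infsum (f k) C)) (strings C j)"
proof -
  have "infsum (\<lambda>u. \<Prod>k<j. f k (u ! k)) (strings C j)
      = infsum (\<lambda>g. \<Prod>k<j. f k (map g [0..<j] ! k)) (PiE {..<j} (\<lambda>_. C))"
    by (rule infsum_reindex_bij_betw[OF bij_betw_map_upt_strings, symmetric])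
  also have "\<dots> = infsum (\<lambda>g. \<Prod>k\<in>{..<j}. f k (g k)) (PiE {..<j} (\<lambda>_. C))"
    by (intro infsum_cong prod.cong) auto
  also have "\<dots> = (\<Prod>k<j. infsum (f k) C)"
  proof (rule infsum_prod_PiE_abs)
    fix k assume "k \<in> {..<j}"
    then show "(\<lambda>a. norm (f k a)) summable_on C"
      using summable[of k] nonneg[of k] by (subst summable_on_cong[where g = "f k"]) auto
  qed simp
  finally have sum: "infsum (\<lambda>u. \<Prod>k<j. f k (u ! k)) (strings C j) = (\<Prod>k<j. infsum (f k) C)" .
  moreover have "0 < (\<Prod>k<j. infsum (f k) C)"
    using pos by (intro prod_pos) auto
  ultimately have "(\<lambda>u. \<Prod>k<j. f k (u ! k)) summable_on strings C j"
    using infsum_not_exists by (metis less_irrefl)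
  with sum show ?thesis by (simp add: has_sum_iff)
qed

lemma infsum_UN_le_sum:
  fixes f :: "'b \<Rightarrow> real"
  assumes "finite J" and "f summable_on S" and "\<And>x. x \<in> S \<Longrightarrow> 0 \<le> f x"
    and "\<And>j. j \<in> J \<Longrightarrow> B j \<subseteq> S"
  shows "infsum f (\<Union>j\<in>J. B j) \<le> (\<Sum>j\<in>J. infsum f (B j))"
  using assms(1,4)
proof (induction J rule: finite_induct)
  case empty
  then show ?case by simp
next
  case (insert j J)
  let ?U = "\<Union>j\<in>J. B j"
  have U: "?U \<subseteq> S" and Bj: "B j \<subseteq> S" using insert.prems by auto
  have "infsum f (\<Union>j\<in>insert j J. B j) = infsum f (B j \<union> (?U - B j))"
    by simp
  also have "\<dots> = infsum f (B j) + infsum f (?U - B j)"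
    using Bj U by (intro infsum_Un_disjoint summable_on_subset[OF assms(2)]) auto
  also have "infsum f (?U - B j) \<le> infsum f ?U"
    using U assms(3) by (intro infsum_mono2 summable_on_subset[OF assms(2)]) auto
  also have "infsum f ?U \<le> (\<Sum>j\<in>J. infsum f (B j))"
    using insert by auto
  finally show ?case using insert by simp
qed

lemma Rset_eq_Bset:
  assumes "j \<le> n"
  shows "Rset C n j = Bset C n (n - j)"
proof -
  have "take j xs = drop (n - j) xs \<longleftrightarrow> (\<forall>i. i + (n - j) < n \<longrightarrow> xs ! (i + (n - j)) = xs ! i)"
    if "length xs = n" for xs :: "'a list"
  proof -
    have "take j xs = drop (n - j) xs \<longleftrightarrow> (\<forall>i<j. xs ! i = xs ! (n - j + i))"
      using that assms by (simp add: list_eq_iff_nth_eq)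
    also have "\<dots> \<longleftrightarrow> (\<forall>i. i + (n - j) < n \<longrightarrow> xs ! (i + (n - j)) = xs ! i)"
    proof -
      have "i + (n - j) < n \<longleftrightarrow> i < j" for i
        using assms by linarith
      then show ?thesis
        by (metis add.commute)
    qed
    finally show ?thesis .
  qed
  then show ?thesis unfolding Rset_def Bset_def strings_def by blast
qed

lemma UN_Rset_eq_UN_Bset:
  assumes "1 \<le> n"
  shows "(\<Union>j\<in>{n div 2..n-1}. Rset C n j) = (\<Union>j\<in>{1..(n+1) div 2}. Bset C n j)"
proof -
  have "(\<Union>j\<in>{n div 2..n-1}. Rset C n j) = (\<Union>j\<in>{n div 2..n-1}. Bset C n (n - j))"
    by (intro SUP_cong Rset_eq_Bset) auto
  also have "\<dots> = (\<Union>j\<in>(\<lambda>j. n - j) ` {n div 2..n-1}. Bset C n j)"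
    by simp
  also have "(\<lambda>j. n - j) ` {n div 2..n-1} = {1..(n+1) div 2}"
  proof
    show "(\<lambda>j. n - j) ` {n div 2..n-1} \<subseteq> {1..(n+1) div 2}"
    proof
      fix d assume "d \<in> (\<lambda>j. n - j) ` {n div 2..n-1}"
      then obtain j where "n div 2 \<le> j" "j \<le> n - 1" "d = n - j" by auto
      then show "d \<in> {1..(n+1) div 2}" using assms by simp linarith
    qed
    show "{1..(n+1) div 2} \<subseteq> (\<lambda>j. n - j) ` {n div 2..n-1}"
    proof
      fix d assume "d \<in> {1..(n+1) div 2}"
      then have "n - d \<in> {n div 2..n-1}" and "d = n - (n - d)" by auto
      then show "d \<in> (\<lambda>j. n - j) ` {n div 2..n-1}" by blast
    qed
  qed
  finally show ?thesis .
qed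

lemma Bset_nth_mod:
  assumes "xs \<in> Bset C n j" and "0 < j" and "i < n"
  shows "xs ! i = xs ! (i mod j)"
  using assms(3)
proof (induction i rule: less_induct)
  case (less i)
  show ?case
  proof (cases "i < j")
    case False
    then have "i - j + j < n"
      using less.prems by linarith
    then have "xs ! i = xs ! (i - j)"
      using assms(1) False unfolding Bset_def by fastforce
    also have "\<dots> = xs ! ((i - j) mod j)"
      by (rule less.IH) (use False assms(2) less.prems in linarith)+
    finally show ?thesis using False by (simp add: le_mod_geq)
  qed simp
qed

lemma inj_on_take_Bset:
  assumes "0 < j"
  shows "inj_on (take j) (Bset C n j)"
proof
  fix x y assume x: "x \<in> Bset C n j" and y: "y \<in> Bset C n j" and "take j x = take j y"
  then have first_block: "x ! k = y ! k" if "k < j" for k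
    using that by (metis nth_take)
  have len: "length x = n" "length y = n"
    using x y unfolding Bset_def strings_def by auto
  show "x = y"
  proof (rule nth_equalityI)
    fix i assume "i < length x"
    then have "x ! i = x ! (i mod j)" and "y ! i = y ! (i mod j)"
      using Bset_nth_mod[OF x assms, of i] Bset_nth_mod[OF y assms, of i] len by auto
    then show "x ! i = y ! i"
      using first_block[of "i mod j"] assms by simp
  qed (simp add: len)
qed

lemma take_Bset_in_strings:
  assumes "xs \<in> Bset C n j"
  shows "take j xs \<in> strings C (min j n)"
  using assms set_take_subset[of j xs] unfolding Bset_def strings_def by auto

lemma Bset_1_subset:
  assumes "0 < j"
  shows "Bset C n 1 \<subseteq> Bset C n j"
proof
  fix x assume x: "x \<in> Bset C n 1"
  have const: "x ! i = x ! 0" if "i < n" for i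
    using Bset_nth_mod[OF x _ that] by simp
  have "x ! (i + j) = x ! i" if "i + j < n" for i
    using const[of "i + j"] const[of i] that by simp
  with x show "x \<in> Bset C n j"
    unfolding Bset_def by simp
qed

lemma UN_Bset_small_index_set:
  assumes "2 \<le> n"
  obtains J where "J \<subseteq> {1..(n+1) div 2}" and "2 * card J \<le> n"
    and "(\<Union>j\<in>{1..(n+1) div 2}. Bset C n j) = (\<Union>j\<in>J. Bset C n j)"
proof (cases "even n")
  case True
  then obtain k where n: "n = 2 * k" by (elim evenE)
  then have "(n+1) div 2 = k" by simp
  then show ?thesis by (intro that[of "{1..k}"]) (simp_all add: n)
next
  case False
  then obtain k where n: "n = 2 * k + 1" by (elim oddE)
  then have half: "(n+1) div 2 = k + 1" and "1 \<le> k" using assms by simp_all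
  then have interval: "{1..k+1} = insert 1 {2..k+1}" and two: "2 \<in> {2..k+1}" by auto
  have "Bset C n 1 \<subseteq> (\<Union>j\<in>{2..k+1}. Bset C n j)"
    using Bset_1_subset[of 2 C n] UN_upper[OF two, of "Bset C n"] by simp
  then have union: "(\<Union>j\<in>{1..k+1}. Bset C n j) = (\<Union>j\<in>{2..k+1}. Bset C n j)"
    unfolding interval by (simp add: Un_absorb1)
  show ?thesis
  proof (rule that)
    show "{2..k+1} \<subseteq> {1..(n+1) div 2}" using half by auto
    show "2 * card {2..k+1} \<le> n" using n by simp
    show "(\<Union>j\<in>{1..(n+1) div 2}. Bset C n j) = (\<Union>j\<in>{2..k+1}. Bset C n j)"
      using union half by simp
  qed
qed

lemma word_prob_Bset_le:
  assumes x: "x \<in> Bset C n j" and "t \<le> j" and "j + t \<le> n"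
    and p: "\<And>a. a \<in> C \<Longrightarrow> 0 \<le> p a \<and> p a \<le> s"
  shows "word_prob p x \<le> (\<Prod>k<j. p (x ! k) ^ (if k < t then 2 else 1)) * s ^ (n - j - t)"
proof -
  have len: "length x = n" and xC: "\<And>i. i < n \<Longrightarrow> x ! i \<in> C"
    using x unfolding Bset_def strings_def by auto
  have period: "x ! (i + j) = x ! i" if "i + j < n" for i
    using x that unfolding Bset_def by blast
  have "word_prob p x = (\<Prod>i\<in>{0..<j}. p (x ! i)) * (\<Prod>i\<in>{j..<j+t}. p (x ! i))
      * (\<Prod>i\<in>{j+t..<n}. p (x ! i))"
    unfolding word_prob_def len using assms(3)
    by (simp add: atLeast0LessThan[symmetric] prod.atLeastLessThan_concat)
  also have "(\<Prod>i\<in>{j..<j+t}. p (x ! i)) = (\<Prod>i<t. p (x ! i))"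
    using assms(3) prod.shift_bounds_nat_ivl[of "\<lambda>i. p (x ! i)" 0 j t]
    by (simp add: atLeast0LessThan add.commute period)
  also have "(\<Prod>i\<in>{0..<j}. p (x ! i)) * (\<Prod>i<t. p (x ! i))
      = (\<Prod>k<j. p (x ! k) ^ (if k < t then 2 else 1))"
  proof -
    have "(\<Prod>k<j. p (x ! k) ^ (if k < t then 2 else 1))
        = (\<Prod>k<j. p (x ! k) * (if k < t then p (x ! k) else 1))"
      by (intro prod.cong) (auto simp: power2_eq_square)
    also have "\<dots> = (\<Prod>k<j. p (x ! k)) * (\<Prod>k<j. if k < t then p (x ! k) else 1)"
      by (rule prod.distrib)
    also have "(\<Prod>k<j. if k < t then p (x ! k) else 1) = (\<Prod>k<t. p (x ! k))"
      using prod.inter_restrict[of "{..<j}" "\<lambda>k. p (x ! k)" "{..<t}"] assms(2)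
      by (simp add: Int_absorb1)
    finally show ?thesis
      by (simp add: atLeast0LessThan)
  qed
  finally have "word_prob p x
      = (\<Prod>k<j. p (x ! k) ^ (if k < t then 2 else 1)) * (\<Prod>i\<in>{j+t..<n}. p (x ! i))" .
  moreover have "(\<Prod>i\<in>{j+t..<n}. p (x ! i)) \<le> s ^ (n - j - t)"
    using prod_mono[of "{j+t..<n}" "\<lambda>i. p (x ! i)" "\<lambda>_. s"] xC p by auto
  moreover have "0 \<le> (\<Prod>k<j. p (x ! k) ^ (if k < t then 2 else 1))"
    using xC p assms(3) by (auto intro!: prod_nonneg)
  ultimately show ?thesis
    by (metis mult_left_mono)
qed

lemma infsum_take_Bset_le:
  fixes G :: "'a list \<Rightarrow> real"
  assumes "0 < j" and "j \<le> n" and "G summable_on strings C j"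
    and "\<And>u. u \<in> strings C j \<Longrightarrow> 0 \<le> G u"
  shows "(\<lambda>x. G (take j x)) summable_on Bset C n j"
    and "infsum (\<lambda>x. G (take j x)) (Bset C n j) \<le> infsum G (strings C j)"
proof -
  have inj: "inj_on (take j) (Bset C n j)"
    using assms(1) by (rule inj_on_take_Bset)
  have image: "take j ` Bset C n j \<subseteq> strings C j"
    using take_Bset_in_strings assms(2) by (metis image_subsetI min.absorb1)
  have summable: "G summable_on take j ` Bset C n j"
    using assms(3) image by (rule summable_on_subset)
  then show "(\<lambda>x. G (take j x)) summable_on Bset C n j"
    by (simp add: summable_on_reindex[OF inj] comp_def)
  have "infsum (\<lambda>x. G (take j x)) (Bset C n j) = infsum G (take j ` Bset C n j)"
    by (simp add: infsum_reindex[OF inj] comp_def)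
  also have "\<dots> \<le> infsum G (strings C j)"
    using summable assms(3,4) image by (intro infsum_mono2) auto
  finally show "infsum (\<lambda>x. G (take j x)) (Bset C n j) \<le> infsum G (strings C j)" .
qed

locale letter_distribution =
  fixes C :: "'a set" and p :: "'a \<Rightarrow> real"
  assumes nonneg: "\<And>a. a \<in> C \<Longrightarrow> 0 \<le> p a"
    and has_sum_1: "(p has_sum 1) C"
begin

lemma le_1: "a \<in> C \<Longrightarrow> p a \<le> 1"
  using finite_sum_le_has_sum[OF has_sum_1, of "{a}"] nonneg by auto

lemma ex_pos: "\<exists>a\<in>C. 0 < p a"
proof (rule ccontr)
  assume "\<not> (\<exists>a\<in>C. 0 < p a)"
  then have "(p has_sum 0) C"
    using nonneg by (intro has_sum_0) (meson antisym not_le)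
  then show False
    using has_sum_unique[OF has_sum_1] by fastforce
qed

lemma summable_power:
  assumes "0 < k"
  shows "(\<lambda>a. p a ^ k) summable_on C"
proof (rule summable_on_comparison_test)
  show "p summable_on C"
    using has_sum_1 summable_on_def by blast
  show "p a ^ k \<le> p a" if "a \<in> C" for a
    using power_decreasing[of 1 k "p a"] nonneg[OF that] le_1[OF that] assms by simp
qed (simp add: nonneg)

lemma infsum_power_pos:
  assumes "0 < k"
  shows "0 < infsum (\<lambda>a. p a ^ k) C"
proof -
  obtain a where "a \<in> C" and "0 < p a"
    using ex_pos by blast
  then have "p a ^ k \<le> infsum (\<lambda>a. p a ^ k) C"
    using finite_sum_le_infsum[OF summable_power[OF assms], of "{a}"] nonneg by auto
  with \<open>0 < p a\<close> show ?thesis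
    by (meson less_le_trans zero_less_power)
qed

lemma m2_le_1: "m2 p C \<le> 1"
proof -
  have "infsum (\<lambda>a. p a ^ 2) C \<le> infsum p C"
    using summable_power[of 1] summable_power[of 2] nonneg le_1
    by (intro infsum_mono) (auto simp: power2_eq_square mult_left_le)
  then show ?thesis
    using has_sum_1 unfolding m2_def by (simp add: infsumI)
qed

lemma le_sqrt_m2:
  assumes "a \<in> C"
  shows "p a \<le> sqrt (m2 p C)"
proof -
  have "p a ^ 2 \<le> m2 p C"
    using finite_sum_le_infsum[OF summable_power[of 2], of "{a}"] assms
    unfolding m2_def by auto
  then show ?thesis
    using nonneg[OF assms] real_le_rsqrt by blast
qed

lemma nth_nonneg: "set u \<subseteq> C \<Longrightarrow> k < length u \<Longrightarrow> 0 \<le> p (u ! k)"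
  using nonneg nth_mem by blast

lemma has_sum_prod_power_strings:
  assumes "\<And>k. k < j \<Longrightarrow> 0 < c k"
  shows "((\<lambda>u. \<Prod>k<j. p (u ! k) ^ c k) has_sum (\<Prod>k<j. infsum (\<lambda>a. p a ^ c k) C)) (strings C j)"
  using assms nonneg summable_power infsum_power_pos
  by (intro has_sum_prod_nth_strings[where f = "\<lambda>k a. p a ^ c k"]) auto

lemma has_sum_word_prob: "(word_prob p has_sum 1) (strings C n)"
proof -
  have "((\<lambda>u. \<Prod>k<n. p (u ! k) ^ 1) has_sum (\<Prod>k<n. infsum (\<lambda>a. p a ^ 1) C)) (strings C n)"
    by (rule has_sum_prod_power_strings) simp
  moreover have "(\<Prod>k<n. infsum (\<lambda>a. p a ^ 1) C) = 1"
    using has_sum_1 by (simp add: infsumI)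
  ultimately show ?thesis
    using has_sum_cong[of "strings C n" "word_prob p" "\<lambda>u. \<Prod>k<n. p (u ! k) ^ 1" 1]
    by (simp add: word_prob_def strings_def)
qed

lemma summable_word_prob: "word_prob p summable_on strings C n"
  using has_sum_word_prob summable_on_def by blast

lemma Pr_UN_le:
  assumes "finite J" and "\<And>j. j \<in> J \<Longrightarrow> B j \<subseteq> strings C n"
  shows "Pr p (\<Union>j\<in>J. B j) \<le> (\<Sum>j\<in>J. Pr p (B j))"
proof -
  have "0 \<le> word_prob p x" if "x \<in> strings C n" for x
    using that unfolding word_prob_def strings_def by (auto intro!: prod_nonneg nth_nonneg)
  then show ?thesis
    unfolding Pr_eq_infsum_word_prob
    using assms summable_word_prob by (intro infsum_UN_le_sum[where S = "strings C n"]) auto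
qed

lemma Pr_Bset_le:
  assumes "0 < j" and "j \<le> (n+1) div 2"
  shows "Pr p (Bset C n j) \<le> m2 p C ^ (n div 2)"
proof -
  define s where "s = sqrt (m2 p C)"
  define t where "t = min j (n - j)"
  define c where "c k = (if k < t then 2 else 1 :: nat)" for k
  define G where "G u = (\<Prod>k<j. p (u ! k) ^ c k)" for u
  have jn: "j \<le> n" using assms by linarith
  have m2: "0 \<le> m2 p C" "m2 p C \<le> 1"
    using infsum_power_pos[of 2] m2_le_1 unfolding m2_def by auto
  have "(\<Prod>k<j. infsum (\<lambda>a. p a ^ c k) C) = (\<Prod>k<j. if k < t then m2 p C else 1)"
    using has_sum_1 by (intro prod.cong) (auto simp: c_def m2_def infsumI)
  also have "\<dots> = m2 p C ^ t"
    using prod.inter_restrict[of "{..<j}" "\<lambda>_. m2 p C" "{..<t}"]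
    by (simp add: t_def Int_absorb1)
  finally have G_sum: "(G has_sum m2 p C ^ t) (strings C j)"
    using has_sum_prod_power_strings[of j c] unfolding G_def c_def by simp
  have G_nonneg: "0 \<le> G u" if "u \<in> strings C j" for u
    using that unfolding G_def strings_def by (auto intro!: prod_nonneg zero_le_power nth_nonneg)
  have G_take: "(\<lambda>x. G (take j x)) summable_on Bset C n j"
       "infsum (\<lambda>x. G (take j x)) (Bset C n j) \<le> m2 p C ^ t"
    using infsum_take_Bset_le[OF assms(1) jn, where G = G and C = C] G_sum G_nonneg
    by (auto simp: has_sum_iff)
  have pointwise: "word_prob p x \<le> G (take j x) * s ^ (n - j - t)" if "x \<in> Bset C n j" for x
  proof -
    have "t \<le> j" and "j + t \<le> n"
      using jn by (auto simp: t_def)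
    moreover have "\<And>a. a \<in> C \<Longrightarrow> 0 \<le> p a \<and> p a \<le> s"
      using nonneg le_sqrt_m2 unfolding s_def by blast
    moreover have "G (take j x) = (\<Prod>k<j. p (x ! k) ^ (if k < t then 2 else 1))"
      unfolding G_def c_def by (intro prod.cong) simp_all
    ultimately show ?thesis
      using word_prob_Bset_le[OF that] by presburger
  qed
  have "Bset C n j \<subseteq> strings C n"
    unfolding Bset_def by blast
  then have "Pr p (Bset C n j) \<le> infsum (\<lambda>x. G (take j x) * s ^ (n - j - t)) (Bset C n j)"
    unfolding Pr_eq_infsum_word_prob
    by (intro infsum_mono summable_on_cmult_left summable_on_subset[OF summable_word_prob]
        G_take(1) pointwise)
  also have "\<dots> = infsum (\<lambda>x. G (take j x)) (Bset C n j) * s ^ (n - j - t)"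
    by (rule infsum_cmult_left) (use G_take in auto)
  also have "\<dots> \<le> m2 p C ^ t * s ^ (n - j - t)"
    using G_take(2) m2 by (intro mult_right_mono) (simp_all add: s_def)
  also have "\<dots> = s ^ (2 * t + (n - j - t))"
    using m2 by (simp add: s_def power_add power_mult)
  also have "\<dots> \<le> s ^ (2 * (n div 2))"
  proof (rule power_decreasing)
    show "2 * (n div 2) \<le> 2 * t + (n - j - t)"
      using assms(2) unfolding t_def by (cases "j \<le> n - j") (simp_all add: min_def; presburger)+
  qed (use m2 in \<open>simp_all add: s_def\<close>)
  also have "\<dots> = m2 p C ^ (n div 2)"
    using m2 by (simp add: s_def power_mult)
  finally show ?thesis .
qed

end

theorem lemma4:
  fixes C :: "'a set" and p :: "'a \<Rightarrow> real" and n :: nat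
  assumes "countable C"
    and "\<forall>a\<in>C. 0 < p a \<and> p a < 1"
    and "(p has_sum 1) C"
    and "n \<ge> 2"
  shows "Pr p (\<Union>j\<in>{1..(n+1) div 2}. Bset C n j) = Pr p (\<Union>j\<in>{n div 2..n-1}. Rset C n j)
       \<and> Pr p (\<Union>j\<in>{n div 2..n-1}. Rset C n j) \<le> real n / 2 * (m2 p C) ^ (n div 2)"
proof -
  interpret letter_distribution C p
    using assms(2,3) by unfold_locales auto
  have unions: "(\<Union>j\<in>{n div 2..n-1}. Rset C n j) = (\<Union>j\<in>{1..(n+1) div 2}. Bset C n j)"
    using assms(4) by (intro UN_Rset_eq_UN_Bset) simp
  obtain J where J: "J \<subseteq> {1..(n+1) div 2}" "2 * card J \<le> n"
    and cover: "(\<Union>j\<in>{1..(n+1) div 2}. Bset C n j) = (\<Union>j\<in>J. Bset C n j)"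
    using UN_Bset_small_index_set[OF assms(4)] .
  have "Pr p (\<Union>j\<in>J. Bset C n j) \<le> (\<Sum>j\<in>J. Pr p (Bset C n j))"
    using J(1) by (intro Pr_UN_le) (auto simp: Bset_def intro: finite_subset)
  also have "\<dots> \<le> (\<Sum>j\<in>J. m2 p C ^ (n div 2))"
    using J(1) by (intro sum_mono Pr_Bset_le) auto
  also have "\<dots> \<le> real n / 2 * m2 p C ^ (n div 2)"
    using J(2) infsum_power_pos[of 2] by (simp add: m2_def mult_right_mono)
  finally show ?thesis
    unfolding unions cover by simp
qed

end
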